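(* Let $(X,Y)\sim P_{X,Y}$ be random variables in $\{0,1\}\times\mathcal{Y}$, $\mathcal{Y}=\{1,\dots,|\mathcal{Y}|\}$, let $p_y=\mathbb{P}(X=0|Y=y)$ and assume $p_1\le\cdots\le p_{|\mathcal{Y}|}$. For $i\in\{2,\dots,|\mathcal{Y}|-1\}$ let $\alpha_i\in[0,1]$ satisfy $\alpha_ip_{i-1}+(1-\alpha_i)p_{i+1}=p_i$, and define the joint distribution $P^i_{Y,Z,X}=P_YP^i_{Z|Y}P^i_{X|Z}$ on $\mathcal{Y}\times(\mathcal{Y}\setminus\{i\})\times\{0,1\}$ by $P^i_{Z|Y}(z|y)=1$ if $y\neq i, z=y$; $=\alpha_i$ if $y=i,z=i-1$; $=1-\alpha_i$ if $y=i,z=i+1$; $=0$ otherwise; and $P^i_{X|Z}(0|z)=p_z$. Then under $P^i_{Y,Z,X}$, $X-Z-Y$ form a Markov chain in this order, $P^i_{X,Y}=P_{X,Y}$, and \[ I(X;Z)-I(X;Y)=P_Y(i)\big[h_2(\alpha_ip_{i-1}+(1-\alpha_i)p_{i+1})-\alpha_ih_2(p_{i-1})-(1-\alpha_i)h_2(p_{i+1})\big]. \]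
   Context: $h_2(p)=-p\log p-(1-p)\log(1-p)$ is the binary entropy function; logarithms are natural. *)

theory Defs
  imports Complex_Main
begin

definition nlogn :: "real \<Rightarrow> real" where
  "nlogn x = (if x = 0 then 0 else - x * ln x)"

definition h2 :: "real \<Rightarrow> real" where
  "h2 q = nlogn q + nlogn (1 - q)"

definition mutual_info :: "'a set \<Rightarrow> 'b set \<Rightarrow> ('a \<Rightarrow> 'b \<Rightarrow> real) \<Rightarrow> real" where
  "mutual_info A B J =
     (\<Sum>u\<in>A. \<Sum>v\<in>B. if J u v = 0 then 0
        else J u v * ln (J u v / ((\<Sum>v'\<in>B. J u v') * (\<Sum>u'\<in>A. J u' v))))"

text \<open>U - V - W is a Markov chain under the joint pmf J u v w on A x B x C:
  U and W are conditionally independent given V, i.e.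
  P(u,v,w) P(v) = P(u,v) P(v,w).\<close>
definition markov_chain :: "'a set \<Rightarrow> 'b set \<Rightarrow> 'c set \<Rightarrow> ('a \<Rightarrow> 'b \<Rightarrow> 'c \<Rightarrow> real) \<Rightarrow> bool" where
  "markov_chain A B C J \<longleftrightarrow>
     (\<forall>u\<in>A. \<forall>v\<in>B. \<forall>w\<in>C.
        J u v w * (\<Sum>u'\<in>A. \<Sum>w'\<in>C. J u' v w') = (\<Sum>w'\<in>C. J u v w') * (\<Sum>u'\<in>A. J u' v w))"

definition PZgY :: "nat \<Rightarrow> real \<Rightarrow> nat \<Rightarrow> nat \<Rightarrow> real" where
  "PZgY i \<alpha> z y =
     (if y \<noteq> i \<and> z = y then 1
      else if y = i \<and> z = i - 1 then \<alpha>
      else if y = i \<and> z = i + 1 then 1 - \<alpha>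
      else 0)"

definition PXgZ :: "(nat \<Rightarrow> real) \<Rightarrow> nat \<Rightarrow> nat \<Rightarrow> real" where
  "PXgZ p x z = (if x = 0 then p z else 1 - p z)"

end

theory Submission
  imports Defs
begin

text \<open>Writing \<open>I(X;V) = H(X) - H(X|V)\<close>: both joint distributions have the same \<open>X\<close>-marginal,
  and under a binary channel \<open>P(X = 0 | v) = p v\<close> the conditional entropy is
  \<open>H(X|V) = \<Sum>\<^sub>v P(v) h2(p v)\<close>. Passing from \<open>Y\<close> to \<open>Z\<close> only splits the mass \<open>P\<^sub>Y(i)\<close>
  between \<open>i - 1\<close> and \<open>i + 1\<close>, so the two conditional entropies differ only in that one term.\<close>

lemma nlogn_eq: "nlogn x = - x * ln x"
  by (simp add: nlogn_def)

lemma nlogn_mult: "nlogn (a * b) = a * nlogn b + b * nlogn a"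
  by (auto simp: nlogn_def ln_mult algebra_simps)

lemma nlogn_split_eq_h2: "nlogn (q * r) + nlogn (q * (1 - r)) - nlogn q = q * h2 r"
  unfolding h2_def nlogn_mult by (simp add: nlogn_def algebra_simps)

lemma mutual_info_eq_entropies:
  fixes J :: "'a \<Rightarrow> 'b \<Rightarrow> real"
  assumes "finite A" "finite B" and J_nonneg: "\<And>u v. u \<in> A \<Longrightarrow> v \<in> B \<Longrightarrow> J u v \<ge> 0"
  shows "mutual_info A B J = (\<Sum>u\<in>A. nlogn (\<Sum>v\<in>B. J u v)) + (\<Sum>v\<in>B. nlogn (\<Sum>u\<in>A. J u v))
           - (\<Sum>u\<in>A. \<Sum>v\<in>B. nlogn (J u v))"
proof -
  have summand: "(if J u v = 0 then 0 else J u v * ln (J u v / ((\<Sum>v'\<in>B. J u v') * (\<Sum>u'\<in>A. J u' v))))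
      = - nlogn (J u v) - J u v * ln (\<Sum>v'\<in>B. J u v') - J u v * ln (\<Sum>u'\<in>A. J u' v)"
    if u: "u \<in> A" and v: "v \<in> B" for u v
  proof (cases "J u v = 0")
    case False
    have "J u v > 0" using J_nonneg[OF u v] False by simp
    moreover have "J u v \<le> (\<Sum>v'\<in>B. J u v')" "J u v \<le> (\<Sum>u'\<in>A. J u' v)"
      using assms u v by (auto intro!: member_le_sum)
    ultimately show ?thesis by (simp add: nlogn_def ln_div ln_mult algebra_simps)
  qed (simp add: nlogn_def)
  have "mutual_info A B J = - (\<Sum>u\<in>A. \<Sum>v\<in>B. J u v * ln (\<Sum>v'\<in>B. J u v'))
      - (\<Sum>u\<in>A. \<Sum>v\<in>B. J u v * ln (\<Sum>u'\<in>A. J u' v)) - (\<Sum>u\<in>A. \<Sum>v\<in>B. nlogn (J u v))"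
    unfolding mutual_info_def by (simp add: summand sum_subtractf sum_negf)
  also have "(\<Sum>u\<in>A. \<Sum>v\<in>B. J u v * ln (\<Sum>v'\<in>B. J u v')) = - (\<Sum>u\<in>A. nlogn (\<Sum>v\<in>B. J u v))"
    by (simp add: nlogn_eq sum_distrib_right sum_negf)
  also have "(\<Sum>u\<in>A. \<Sum>v\<in>B. J u v * ln (\<Sum>u'\<in>A. J u' v)) = - (\<Sum>v\<in>B. nlogn (\<Sum>u\<in>A. J u v))"
    by (subst sum.swap) (simp add: nlogn_eq sum_distrib_right sum_negf)
  finally show ?thesis by simp
qed

lemma mutual_info_binary_channel:
  fixes J :: "nat \<Rightarrow> nat \<Rightarrow> real"
  assumes "finite B" and w_nonneg: "\<And>v. v \<in> B \<Longrightarrow> w v \<ge> 0"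
    and r_range: "\<And>v. v \<in> B \<Longrightarrow> 0 \<le> r v \<and> r v \<le> 1"
    and J_eq: "\<And>x v. x \<in> {0,1} \<Longrightarrow> v \<in> B \<Longrightarrow> J x v = w v * PXgZ r x v"
  shows "mutual_info {0,1} B J = (\<Sum>x\<in>{0,1}. nlogn (\<Sum>v\<in>B. J x v)) - (\<Sum>v\<in>B. w v * h2 (r v))"
proof -
  have column: "nlogn (\<Sum>x\<in>{0,1}. J x v) - (\<Sum>x\<in>{0,1}. nlogn (J x v)) = - (w v * h2 (r v))"
    if "v \<in> B" for v
  proof -
    have "(\<Sum>x\<in>{0,1}. J x v) = w v" "(\<Sum>x\<in>{0,1}. nlogn (J x v))
        = nlogn (w v * r v) + nlogn (w v * (1 - r v))"
      using J_eq[OF _ that] by (simp_all add: PXgZ_def algebra_simps)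
    then show ?thesis using nlogn_split_eq_h2[of "w v" "r v"] by simp
  qed
  have "mutual_info {0,1} B J = (\<Sum>x\<in>{0,1}. nlogn (\<Sum>v\<in>B. J x v))
      + (\<Sum>v\<in>B. nlogn (\<Sum>x\<in>{0,1}. J x v) - (\<Sum>x\<in>{0,1}. nlogn (J x v)))"
    using assms by (subst mutual_info_eq_entropies)
      (auto simp: PXgZ_def sum_subtractf sum.swap[of _ B] intro!: mult_nonneg_nonneg)
  also have "\<dots> = (\<Sum>x\<in>{0,1}. nlogn (\<Sum>v\<in>B. J x v)) - (\<Sum>v\<in>B. w v * h2 (r v))"
    by (simp only: column sum_negf cong: sum.cong)
  finally show ?thesis .
qed

lemma markov_chain_factorization:
  "markov_chain A B C (\<lambda>u v w. c u v * f v w)"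
  unfolding markov_chain_def
proof (intro ballI)
  fix u v w
  have "(\<Sum>u'\<in>A. \<Sum>w'\<in>C. c u' v * f v w') = (\<Sum>u'\<in>A. c u' v) * (\<Sum>w'\<in>C. f v w')"
    by (simp add: sum_product)
  moreover have "(\<Sum>w'\<in>C. c u v * f v w') = c u v * (\<Sum>w'\<in>C. f v w')"
    by (simp add: sum_distrib_left)
  moreover have "(\<Sum>u'\<in>A. c u' v * f v w) = (\<Sum>u'\<in>A. c u' v) * f v w"
    by (simp add: sum_distrib_right)
  ultimately show "c u v * f v w * (\<Sum>u'\<in>A. \<Sum>w'\<in>C. c u' v * f v w')
      = (\<Sum>w'\<in>C. c u v * f v w') * (\<Sum>u'\<in>A. c u' v * f v w)"
    by simp
qed

lemma PZgY_nonneg: "0 \<le> \<alpha> \<Longrightarrow> \<alpha> \<le> 1 \<Longrightarrow> PZgY i \<alpha> z y \<ge> 0"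
  by (simp add: PZgY_def)

lemma sum_PZgY:
  assumes "2 \<le> i" "i \<le> m - 1" "y \<in> {1..m}"
  shows "(\<Sum>z\<in>{1..m} - {i}. PZgY i \<alpha> z y * f z)
           = (if y = i then \<alpha> * f (i - 1) + (1 - \<alpha>) * f (i + 1) else f y)"
proof (cases "y = i")
  case True
  have neighbours: "i - 1 \<in> {1..m} - {i}" "i + 1 \<in> {1..m} - {i}" "i - 1 \<noteq> i + 1"
    using assms(1,2) by auto
  have "(\<Sum>z\<in>{1..m} - {i}. PZgY i \<alpha> z y * f z)
      = (\<Sum>z\<in>{1..m} - {i}. (if z = i - 1 then \<alpha> * f (i - 1) else 0)
                           + (if z = i + 1 then (1 - \<alpha>) * f (i + 1) else 0))"
    using True assms(1) by (intro sum.cong) (auto simp: PZgY_def)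
  also have "\<dots> = \<alpha> * f (i - 1) + (1 - \<alpha>) * f (i + 1)"
    using neighbours by (simp add: sum.distrib)
  finally show ?thesis using True by simp
next
  case False
  have "(\<Sum>z\<in>{1..m} - {i}. PZgY i \<alpha> z y * f z) = (\<Sum>z\<in>{1..m} - {i}. if z = y then f y else 0)"
    using False by (intro sum.cong) (auto simp: PZgY_def)
  then show ?thesis using False assms(3) by simp
qed

lemma sum_PZgY_PXgZ:
  assumes "2 \<le> i" "i \<le> m - 1" "y \<in> {1..m}"
    and "\<alpha> * p (i - 1) + (1 - \<alpha>) * p (i + 1) = p i"
  shows "(\<Sum>z\<in>{1..m} - {i}. PZgY i \<alpha> z y * PXgZ p x z) = PXgZ p x y"
proof -
  have "(\<Sum>z\<in>{1..m} - {i}. PZgY i \<alpha> z y * PXgZ p x z) = (if y = i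
      then \<alpha> * PXgZ p x (i - 1) + (1 - \<alpha>) * PXgZ p x (i + 1) else PXgZ p x y)"
    by (rule sum_PZgY[OF assms(1-3)])
  then show ?thesis using assms(4) by (auto simp: PXgZ_def algebra_simps)
qed

lemma sum_output_PZgY:
  assumes "2 \<le> i" "i \<le> m - 1"
  shows "(\<Sum>z\<in>{1..m} - {i}. (\<Sum>y\<in>{1..m}. w y * PZgY i \<alpha> z y) * g z)
           = (\<Sum>y\<in>{1..m}. w y * g y) + w i * (\<alpha> * g (i - 1) + (1 - \<alpha>) * g (i + 1) - g i)"
proof -
  have i_mem: "i \<in> {1..m}" using assms by simp
  have "(\<Sum>z\<in>{1..m} - {i}. (\<Sum>y\<in>{1..m}. w y * PZgY i \<alpha> z y) * g z)
      = (\<Sum>z\<in>{1..m} - {i}. \<Sum>y\<in>{1..m}. w y * (PZgY i \<alpha> z y * g z))"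
    by (simp add: sum_distrib_right mult.assoc)
  also have "\<dots> = (\<Sum>y\<in>{1..m}. w y * (\<Sum>z\<in>{1..m} - {i}. PZgY i \<alpha> z y * g z))"
    by (subst sum.swap) (simp add: sum_distrib_left)
  also have "\<dots> = (\<Sum>y\<in>{1..m}. w y * g y
      + (if y = i then w i * (\<alpha> * g (i - 1) + (1 - \<alpha>) * g (i + 1) - g i) else 0))"
    using sum_PZgY[OF assms] by (intro sum.cong refl) (auto simp: algebra_simps)
  finally show ?thesis using i_mem by (simp add: sum.distrib)
qed

theorem proposition1:
  fixes m i :: nat and PXY :: "nat \<Rightarrow> nat \<Rightarrow> real" and p :: "nat \<Rightarrow> real" and \<alpha> :: real
  assumes PXY_nonneg: "\<forall>x\<in>{0,1}. \<forall>y\<in>{1..m}. PXY x y \<ge> 0"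
    and PXY_sum: "(\<Sum>x\<in>{0,1}. \<Sum>y\<in>{1..m}. PXY x y) = 1"
    and p_range: "\<forall>y\<in>{1..m}. 0 \<le> p y \<and> p y \<le> 1"
    and p_cond: "\<forall>y\<in>{1..m}. PXY 0 y = p y * (PXY 0 y + PXY 1 y)"
    and p_mono: "\<forall>y\<in>{1..m}. \<forall>y'\<in>{1..m}. y \<le> y' \<longrightarrow> p y \<le> p y'"
    and i_range: "2 \<le> i" "i \<le> m - 1"
    and alpha_range: "0 \<le> \<alpha>" "\<alpha> \<le> 1"
    and alpha_eq: "\<alpha> * p (i - 1) + (1 - \<alpha>) * p (i + 1) = p i"
  shows
    "let PY = (\<lambda>y. PXY 0 y + PXY 1 y);
         J = (\<lambda>y z x. PY y * PZgY i \<alpha> z y * PXgZ p x z);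
         Zs = {1..m} - {i}
     in markov_chain {0,1} Zs {1..m} (\<lambda>x z y. J y z x)
        \<and> (\<forall>x\<in>{0,1}. \<forall>y\<in>{1..m}. (\<Sum>z\<in>Zs. J y z x) = PXY x y)
        \<and> mutual_info {0,1} Zs (\<lambda>x z. \<Sum>y\<in>{1..m}. J y z x)
            - mutual_info {0,1} {1..m} PXY
          = PY i * (h2 (\<alpha> * p (i - 1) + (1 - \<alpha>) * p (i + 1))
                    - \<alpha> * h2 (p (i - 1)) - (1 - \<alpha>) * h2 (p (i + 1)))"
proof -
  define PY where "PY = (\<lambda>y. PXY 0 y + PXY 1 y)"
  define Zs where "Zs = {1..m} - {i}"
  define PZ where "PZ = (\<lambda>z. \<Sum>y\<in>{1..m}. PY y * PZgY i \<alpha> z y)"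
  have PY_nonneg: "PY y \<ge> 0" if "y \<in> {1..m}" for y
    using PXY_nonneg that by (force simp: PY_def)
  have PXY_eq: "PXY x y = PY y * PXgZ p x y" if "x \<in> {0,1}" "y \<in> {1..m}" for x y
    using p_cond that by (auto simp: PY_def PXgZ_def algebra_simps)
  have markov: "markov_chain {0,1} Zs {1..m} (\<lambda>x z y. PY y * PZgY i \<alpha> z y * PXgZ p x z)"
    using markov_chain_factorization[of _ _ _ "PXgZ p" "\<lambda>z y. PY y * PZgY i \<alpha> z y"]
    by (simp add: ac_simps)
  have X_given_Y: "(\<Sum>z\<in>Zs. PY y * PZgY i \<alpha> z y * PXgZ p x z) = PXY x y"
    if "x \<in> {0,1}" "y \<in> {1..m}" for x y
    using sum_PZgY_PXgZ[OF i_range that(2) alpha_eq] PXY_eq[OF that]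
    by (simp add: Zs_def sum_distrib_left[symmetric] mult.assoc)
  have IZ: "mutual_info {0,1} Zs (\<lambda>x z. \<Sum>y\<in>{1..m}. PY y * PZgY i \<alpha> z y * PXgZ p x z)
      = (\<Sum>x\<in>{0,1}. nlogn (\<Sum>y\<in>{1..m}. PXY x y)) - (\<Sum>z\<in>Zs. PZ z * h2 (p z))"
  proof -
    have "(\<Sum>z\<in>Zs. \<Sum>y\<in>{1..m}. PY y * PZgY i \<alpha> z y * PXgZ p x z) = (\<Sum>y\<in>{1..m}. PXY x y)"
      if "x \<in> {0,1}" for x
      using X_given_Y that by (subst sum.swap) simp
    moreover have "PZ z \<ge> 0" for z
      unfolding PZ_def using PY_nonneg PZgY_nonneg[OF alpha_range] by (auto intro!: sum_nonneg)
    ultimately show ?thesis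
      using p_range by (subst mutual_info_binary_channel[where w = PZ and r = p])
        (auto simp: Zs_def PZ_def sum_distrib_right)
  qed
  have IY: "mutual_info {0,1} {1..m} PXY
      = (\<Sum>x\<in>{0,1}. nlogn (\<Sum>y\<in>{1..m}. PXY x y)) - (\<Sum>y\<in>{1..m}. PY y * h2 (p y))"
    using PY_nonneg p_range PXY_eq by (intro mutual_info_binary_channel) auto
  have cond_entropy_Z: "(\<Sum>z\<in>Zs. PZ z * h2 (p z)) = (\<Sum>y\<in>{1..m}. PY y * h2 (p y))
      + PY i * (\<alpha> * h2 (p (i - 1)) + (1 - \<alpha>) * h2 (p (i + 1)) - h2 (p i))"
    unfolding PZ_def Zs_def by (rule sum_output_PZgY[OF i_range])
  show ?thesis
    unfolding Let_def PY_def[symmetric] Zs_def[symmetric]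
    using markov X_given_Y IZ IY cond_entropy_Z alpha_eq by (simp add: algebra_simps)
qed

end
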